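(* Let $G'\le G''$ be finite abelian groups and let $k$ be a positive integer dividing $|G'|$. If $L$ is a subgroup of $G''$ with $[G'':L]=k$, then there exists a subgroup $K$ of $G'$ with $[G':K]=k$ and $K\subset L$. *)

theory Defs
  imports "HOL-Algebra.Algebra"
begin

end

theory Submission
  imports Defs
begin

text \<open>
  Write \<open>j\<close> for the index of \<open>L \<inter> H\<close> in \<open>H\<close>. By the second isomorphism theorem
  \<open>j\<close> is also the index of \<open>L\<close> in \<open>L H\<close>, so it divides the index \<open>k\<close> of \<open>L\<close> in \<open>G\<close>.
  Hence \<open>|H| / k\<close> divides \<open>|H| / j = |L \<inter> H|\<close>, and since a finite abelian group has
  a subgroup of every order dividing its order, \<open>L \<inter> H\<close> contains a subgroup \<open>K\<close>
  of order \<open>|H| / k\<close>, that is, of index \<open>k\<close> in \<open>H\<close>.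
\<close>

lemma (in group) card_set_mult_of_inter_trivial:
  assumes "subgroup P G" and "subgroup M G" and "P \<inter> M = {\<one>}"
  shows "card (P <#> M) = card P * card M"
proof -
  interpret PM: group_disjoint_sum G P M
    using assms(1,2) is_group by (simp add: group_disjoint_sum_def)
  have "inj_on (\<lambda>(x, y). x \<otimes> y) (P \<times> M)"
    using PM.cancel assms(3) by (auto simp: inj_on_def)
  moreover have "P <#> M = (\<lambda>(x, y). x \<otimes> y) ` (P \<times> M)"
    unfolding set_mult_def by auto
  ultimately show ?thesis
    by (simp add: card_image card_cartesian_product)
qed

lemma (in group) lagrange_in_subgroup:
  assumes "subgroup K G" and "subgroup H G" and "K \<subseteq> H"
  shows "card (rcosets\<^bsub>G\<lparr>carrier := H\<rparr>\<^esub> K) * card K = card H"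
proof -
  interpret GH: group "G\<lparr>carrier := H\<rparr>"
    using subgroup_imp_group[OF assms(2)] .
  show ?thesis
    using GH.lagrange[OF subgroup_incl[OF assms]] by (simp add: order_def)
qed

lemma (in group) card_subgroup_dvd_card:
  assumes "subgroup K G" and "subgroup H G" and "K \<subseteq> H"
  shows "card K dvd card H"
  by (metis lagrange_in_subgroup[OF assms] dvd_triv_right)

lemma (in group) card_set_mult_of_coprime:
  assumes "subgroup P G" and "subgroup M G" and "coprime (card P) (card M)"
  shows "card (P <#> M) = card P * card M"
proof -
  have PM: "subgroup (P \<inter> M) G"
    using subgroups_Inter_pair[OF assms(1,2)] .
  have "card (P \<inter> M) = 1"
    using card_subgroup_dvd_card[OF PM assms(1)] card_subgroup_dvd_card[OF PM assms(2)]
      coprime_common_divisor_nat[OF assms(3)] by blast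
  then have "P \<inter> M = {\<one>}"
    using subgroup.one_closed[OF PM] by (metis card_1_singletonE singletonD)
  then show ?thesis
    by (rule card_set_mult_of_inter_trivial[OF assms(1,2)])
qed

lemma (in group) card_rcosets_tower:
  assumes "finite (carrier G)" and "subgroup K G" and "subgroup H G" and "K \<subseteq> H"
  shows "card (rcosets K) = card (rcosets H) * card (rcosets\<^bsub>G\<lparr>carrier := H\<rparr>\<^esub> K)"
proof -
  have "finite K" "K \<noteq> {}"
    using assms(1,2) subgroup.subset subgroup.one_closed finite_subset by blast+
  then have "card K > 0"
    by (simp add: card_gt_0_iff)
  moreover have "card (rcosets K) * card K
      = card (rcosets H) * card (rcosets\<^bsub>G\<lparr>carrier := H\<rparr>\<^esub> K) * card K"
    using lagrange[OF assms(2)] lagrange[OF assms(3)] lagrange_in_subgroup[OF assms(2-4)]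
    by (simp add: mult.assoc)
  ultimately show ?thesis
    by simp
qed

lemma (in group) card_rcosets_inter_dvd_card_rcosets:
  assumes "finite (carrier G)" and "L \<lhd> G" and "subgroup H G"
  shows "card (rcosets\<^bsub>G\<lparr>carrier := H\<rparr>\<^esub> (L \<inter> H)) dvd card (rcosets L)"
proof -
  interpret second_isomorphism_grp L G H
    using assms(2,3) by (simp add: second_isomorphism_grp_def second_isomorphism_grp_axioms_def)
  have "G\<lparr>carrier := H\<rparr> Mod (L \<inter> H) \<cong> G\<lparr>carrier := L <#> H\<rparr> Mod L"
    using normal_intersection_quotient_isom by (rule is_isoI)
  then have "card (rcosets\<^bsub>G\<lparr>carrier := H\<rparr>\<^esub> (L \<inter> H))
      = card (rcosets\<^bsub>G\<lparr>carrier := L <#> H\<rparr>\<^esub> L)"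
    using iso_same_card by (fastforce simp: FactGroup_def)
  moreover have "card (rcosets L)
      = card (rcosets (L <#> H)) * card (rcosets\<^bsub>G\<lparr>carrier := L <#> H\<rparr>\<^esub> L)"
    using card_rcosets_tower[OF assms(1) is_subgroup normal_set_mult_subgroup H_contained_in_set_mult] .
  ultimately show ?thesis
    by simp
qed

lemma (in comm_group) comm_group_subgroup:
  assumes "subgroup H G"
  shows "comm_group (G\<lparr>carrier := H\<rparr>)"
proof -
  interpret GH: group "G\<lparr>carrier := H\<rparr>"
    using subgroup_imp_group[OF assms] .
  show ?thesis
    using subgroup.subset[OF assms] m_comm by (intro GH.group_comm_groupI) auto
qed

lemma (in comm_group) exists_subgroup_card:
  assumes "finite (carrier G)" and "d dvd order G"
  shows "\<exists>K. subgroup K G \<and> card K = d"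
  using assms(2)
proof (induction d rule: less_induct)
  case (less d)
  show ?case
  proof (cases "d = 1")
    case True
    then show ?thesis
      using triv_subgroup by force
  next
    case False
    have "d \<noteq> 0"
      using less.prems assms(1) order_gt_0_iff_finite by auto
    obtain p :: nat where p: "Factorial_Ring.prime p" "p dvd d"
      using prime_factor_nat[OF False] by blast
    define a where "a = multiplicity p d"
    obtain m where d: "d = p ^ a * m" and "\<not> p dvd m"
      using multiplicity_decompose'[OF \<open>d \<noteq> 0\<close>] p(1) not_prime_unit a_def by blast
    have "a > 0"
      using p \<open>d \<noteq> 0\<close> by (simp add: a_def prime_multiplicity_gt_zero_iff)
    then have "p ^ a > 1"
      using p(1) prime_gt_1_nat one_less_power by blast
    moreover have "m > 0"
      using d \<open>d \<noteq> 0\<close> by auto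
    ultimately have "m < d"
      using d by simp
    moreover have "m dvd order G"
      using d less.prems by (metis dvd_mult_right)
    ultimately obtain M where M: "subgroup M G" "card M = m"
      using less.IH by blast
    obtain q where "order G = p ^ a * q"
      using d less.prems by (metis dvd_mult_left dvd_def)
    then obtain P where P: "subgroup P G" "card P = p ^ a"
      using sylow_thm[of p G a q] p(1) is_group assms(1) by blast
    have "coprime (card P) (card M)"
      using P(2) M(2) p(1) \<open>\<not> p dvd m\<close> by (simp add: prime_imp_coprime_nat)
    then have "card (P <#> M) = d"
      using card_set_mult_of_coprime[OF P(1) M(1)] P(2) M(2) d by simp
    then show ?thesis
      using mult_subgroups[OF P(1) M(1)] by blast
  qed
qed

lemma (in comm_group) exists_subgroup_card_within:
  assumes "finite H" and "subgroup H G" and "d dvd card H"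
  shows "\<exists>K. subgroup K G \<and> K \<subseteq> H \<and> card K = d"
proof -
  interpret GH: comm_group "G\<lparr>carrier := H\<rparr>"
    using comm_group_subgroup[OF assms(2)] .
  obtain K where "subgroup K (G\<lparr>carrier := H\<rparr>)" "card K = d"
    using GH.exists_subgroup_card assms(1,3) by (auto simp: order_def)
  then show ?thesis
    using incl_subgroup[OF assms(2)] subgroup.subset by fastforce
qed

theorem lemma2:
  fixes G :: "('a, 'b) monoid_scheme" and H L :: "'a set" and k :: nat
  assumes "comm_group G" and "finite (carrier G)"
    and "subgroup H G"
    and "k > 0" and "k dvd card H"
    and "subgroup L G" and "card (rcosets\<^bsub>G\<^esub> L) = k"
  shows "\<exists>K. subgroup K (G\<lparr>carrier := H\<rparr>)
             \<and> card (rcosets\<^bsub>G\<lparr>carrier := H\<rparr>\<^esub> K) = k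
             \<and> K \<subseteq> L"
proof -
  interpret G: comm_group G by fact
  define j where "j = card (rcosets\<^bsub>G\<lparr>carrier := H\<rparr>\<^esub> (L \<inter> H))"
  have "j dvd k"
    using G.card_rcosets_inter_dvd_card_rcosets[OF assms(2) G.subgroup_imp_normal[OF assms(6)] assms(3)]
      assms(7) by (simp add: j_def)
  then obtain r where k: "k = j * r" ..
  obtain m where H: "card H = k * m"
    using assms(5) ..
  have LH: "subgroup (L \<inter> H) G"
    using G.subgroups_Inter_pair[OF assms(6,3)] .
  have "j * card (L \<inter> H) = card H"
    using G.lagrange_in_subgroup[OF LH assms(3)] by (simp add: j_def mult.commute)
  then have "m dvd card (L \<inter> H)"
    using H k assms(4) by (simp add: mult.assoc)
  moreover have "finite H"
    using assms(2,3) subgroup.subset finite_subset by blast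
  ultimately obtain K where K: "subgroup K G" "K \<subseteq> L \<inter> H" "card K = m"
    using G.exists_subgroup_card_within[OF _ LH] by blast
  have "card (rcosets\<^bsub>G\<lparr>carrier := H\<rparr>\<^esub> K) * m = k * m"
    using G.lagrange_in_subgroup[OF K(1) assms(3)] K H by auto
  moreover have "m > 0"
    using H \<open>finite H\<close> subgroup.one_closed[OF assms(3)] by (cases "m = 0") auto
  ultimately show ?thesis
    using G.subgroup_incl[OF K(1) assms(3)] K(2) by auto
qed

end
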